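(* For each random context grammar $G$ there is a random context grammar $G'$ with $L(G')=L(G)$ such that every production $(A\to x,\mathit{Per},\mathit{For})$ of $G'$ satisfies $A\notin\mathit{For}$.
   Context: For an alphabet $V$, $V^+=V^*-\{\lambda\}$, and $\mathit{alph}(w)$ is the set of symbols occurring in $w$. A random context grammar is a quadruple $G=(N,T,P,S)$ where $N$ and $T$ are disjoint finite alphabets of nonterminals and terminals, $V=N\cup T$, $S\in N$, and $P$ is a finite set of productions $(A\to x,\mathit{Per},\mathit{For})$ with $A\in N$, $x\in V^+$ (no erasing productions), $\mathit{Per},\mathit{For}\subseteq N$. For $u,v\in V^*$, $uAv\Rightarrow uxv$ holds if $\mathit{Per}\subseteq\mathit{alph}(uv)$ and $\mathit{alph}(uv)\cap\mathit{For}=\emptyset$. $L(G)=\{w\in T^*:S\Rightarrow^*w\}$. *)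

theory Defs
  imports Main
begin

text \<open>Symbols: nonterminals and terminals live in disjoint parts of a sum type,
so N and T are automatically disjoint.\<close>
datatype ('n, 't) sym = NT 'n | Tm 't

type_synonym ('n, 't) rc_prod = "'n \<times> ('n, 't) sym list \<times> 'n set \<times> 'n set"

record ('n, 't) rcg =
  Nts   :: "'n set"
  Tms   :: "'t set"
  Prods :: "('n, 't) rc_prod set"
  Start :: 'n

definition sym_in :: "('n, 't) rcg \<Rightarrow> ('n, 't) sym \<Rightarrow> bool" where
  "sym_in G s = (case s of NT A \<Rightarrow> A \<in> Nts G | Tm a \<Rightarrow> a \<in> Tms G)"

definition rcg_wf :: "('n, 't) rcg \<Rightarrow> bool" where
  "rcg_wf G \<longleftrightarrow> finite (Nts G) \<and> finite (Tms G) \<and> Start G \<in> Nts G \<and> finite (Prods G) \<and>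
     (\<forall>(A, x, Per, For) \<in> Prods G.
        A \<in> Nts G \<and> x \<noteq> [] \<and> (\<forall>s \<in> set x. sym_in G s) \<and> Per \<subseteq> Nts G \<and> For \<subseteq> Nts G)"

definition rc_step :: "('n, 't) rcg \<Rightarrow> ('n, 't) sym list \<Rightarrow> ('n, 't) sym list \<Rightarrow> bool" where
  "rc_step G w w' \<longleftrightarrow> (\<exists>u v A x Per For. (A, x, Per, For) \<in> Prods G \<and>
      w = u @ [NT A] @ v \<and> w' = u @ x @ v \<and>
      NT ` Per \<subseteq> set (u @ v) \<and> set (u @ v) \<inter> NT ` For = {})"

definition rc_lang :: "('n, 't) rcg \<Rightarrow> 't list set" where
  "rc_lang G = {w. w \<in> lists (Tms G) \<and> (rc_step G)\<^sup>*\<^sup>* [NT (Start G)] (map Tm w)}"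

end

theory Submission
  imports Defs
begin

(*
  Every nonterminal A of G gets two copies in G': an ordinary copy (A,0)
  and a marked copy (A,1).  A rewriting step  uAv => uxv  of G by (A -> x, Per, For)
  is simulated in G' by two steps:
    (A,0) -> (A,1)            permitted only if no marked symbol occurs elsewhere,
    (A,1) -> x'               with Per, For replaced by their ordinary copies,
  where x' is x with every nonterminal replaced by its ordinary copy.  The head of
  every production of G' is then never in its forbidding set: the first kind
  forbids only marked symbols but rewrites an ordinary one, the second forbids only
  ordinary symbols but rewrites a marked one.

  At most one mark is ever present because the marking
  production forbids all marks; hence a marked form can only continue by rewriting
  its mark, which is a step of G.  Since terminal words contain no marks, both
  grammars generate the same language.
*)

lemma rc_stepI:
  assumes "(A, x, Per, For) \<in> Prods G" "NT ` Per \<subseteq> set (u @ v)" "set (u @ v) \<inter> NT ` For = {}"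
  shows "rc_step G (u @ [NT A] @ v) (u @ x @ v)"
  unfolding rc_step_def using assms
  by (intro exI[of _ u] exI[of _ v] exI[of _ A] exI[of _ x] exI[of _ Per] exI[of _ For]) simp

lemma rc_stepE:
  assumes "rc_step G w w'"
  obtains u v A x Per For where "(A, x, Per, For) \<in> Prods G"
    "w = u @ [NT A] @ v" "w' = u @ x @ v"
    "NT ` Per \<subseteq> set (u @ v)" "set (u @ v) \<inter> NT ` For = {}"
  using assms unfolding rc_step_def by (elim exE conjE) (rule that)

fun enc :: "('n, 't) sym \<Rightarrow> (('n, 't) sym \<times> nat, 't) sym" where
  "enc (NT A) = NT (NT A, 0)"
| "enc (Tm a) = Tm a"

definition lift :: "'n set \<Rightarrow> (('n, 't) sym \<times> nat) set" where
  "lift S = (\<lambda>A. (NT A, 0)) ` S"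

definition marks :: "('n, 't) rcg \<Rightarrow> (('n, 't) sym \<times> nat) set" where
  "marks G = (\<lambda>A. (NT A, 1)) ` Nts G"

definition marked :: "('n, 't) sym list \<Rightarrow> 'n \<Rightarrow> ('n, 't) sym list
    \<Rightarrow> (('n, 't) sym \<times> nat, 't) sym list" where
  "marked u A v = map enc u @ [NT (NT A, 1)] @ map enc v"

lemma enc_eq_ordinary_iff [simp]:
  "enc s = NT (NT A, 0) \<longleftrightarrow> s = NT A" "NT (NT A, 0) = enc s \<longleftrightarrow> s = NT A"
  by (cases s; auto)+

lemma map_enc_Tm [simp]: "map enc (map Tm w) = map Tm w"
  by (induction w) auto

lemma inj_enc: "inj enc"
proof (rule injI)
  show "enc s = enc s' \<Longrightarrow> s = s'" for s s' :: "('n, 't) sym"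
    by (cases s; cases s') auto
qed

lemma marked_notin_enc: "n \<noteq> 0 \<Longrightarrow> NT (X, n) \<notin> set (map enc w)"
proof (induction w)
  case (Cons s w)
  then show ?case by (cases s) auto
qed simp

lemma ordinary_in_enc_iff: "NT (NT B, 0) \<in> set (map enc w) \<longleftrightarrow> NT B \<in> set w"
  by (induction w) auto

lemma enc_permitted: "NT ` lift P \<subseteq> set (map enc w) \<longleftrightarrow> NT ` P \<subseteq> set w"
  by (simp add: lift_def image_subset_iff ordinary_in_enc_iff del: set_map)

lemma enc_forbidden: "set (map enc w) \<inter> NT ` lift F = {} \<longleftrightarrow> set w \<inter> NT ` F = {}"
proof -
  have "set (map enc w) \<inter> NT ` lift F = {} \<longleftrightarrow> (\<forall>B\<in>F. NT (NT B, 0) \<notin> set (map enc w))"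
    by (auto simp: lift_def simp del: set_map)
  also have "\<dots> \<longleftrightarrow> set w \<inter> NT ` F = {}"
    by (auto simp: ordinary_in_enc_iff simp del: set_map)
  finally show ?thesis .
qed

lemma no_marks_in_enc: "set (map enc w) \<inter> NT ` marks G = {}"
  using marked_notin_enc by (fastforce simp: marks_def)

lemma enc_split_ordinary:
  assumes "map enc y = u' @ NT (NT B, 0) # v'"
  obtains u v where "y = u @ NT B # v" "u' = map enc u" "v' = map enc v"
proof -
  from assms obtain u v0 where "y = u @ v0" "u' = map enc u" "NT (NT B, 0) # v' = map enc v0"
    by (auto simp: map_eq_append_conv)
  then show ?thesis using that by (auto simp: Cons_eq_map_conv)
qed

lemma marked_split:
  assumes eq: "marked u A v = u' @ NT (X, n) # v'" and "n \<noteq> 0"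
  shows "X = NT A \<and> n = 1 \<and> u' = map enc u \<and> v' = map enc v"
proof -
  have "NT (X, n) \<in> set (marked u A v)" using eq by simp
  then have Xn: "X = NT A \<and> n = 1"
    using marked_notin_enc[OF \<open>n \<noteq> 0\<close>] by (auto simp: marked_def)
  have "NT (NT A, 1) \<notin> set (map enc u)" "NT (NT A, 1) \<notin> set (map enc v)"
    by (rule marked_notin_enc; simp)+
  from append_Cons_eq_iff[OF this] have "u' = map enc u \<and> v' = map enc v"
    using eq Xn by (simp add: marked_def)
  with Xn show ?thesis by simp
qed

section \<open>The grammar with marked nonterminals\<close>

definition split_grammar :: "('n, 't) rcg \<Rightarrow> (('n, 't) sym \<times> nat, 't) rcg" where
  "split_grammar G = \<lparr>Nts = lift (Nts G) \<union> marks G, Tms = Tms G,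
     Prods = (\<lambda>A. ((NT A, 0), [NT (NT A, 1)], {}, marks G)) ` Nts G \<union>
       (\<lambda>(A, x, P, F). ((NT A, 1), map enc x, lift P, lift F)) ` Prods G,
     Start = (NT (Start G), 0)\<rparr>"

lemma split_grammar_simps:
  "Nts (split_grammar G) = lift (Nts G) \<union> marks G"
  "Tms (split_grammar G) = Tms G"
  "Start (split_grammar G) = (NT (Start G), 0)"
  "Prods (split_grammar G) = (\<lambda>A. ((NT A, 0), [NT (NT A, 1)], {}, marks G)) ` Nts G \<union>
       (\<lambda>(A, x, P, F). ((NT A, 1), map enc x, lift P, lift F)) ` Prods G"
  unfolding split_grammar_def by simp_all

lemma split_grammar_prods_cases:
  assumes "(X, x', P', F') \<in> Prods (split_grammar G)"
  obtains (mark) B where "B \<in> Nts G" "X = (NT B, 0)" "x' = [NT (NT B, 1)]" "P' = {}" "F' = marks G"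
  | (rewrite) B x P F where "(B, x, P, F) \<in> Prods G" "X = (NT B, 1)" "x' = map enc x"
      "P' = lift P" "F' = lift F"
  using assms unfolding split_grammar_simps by auto

lemma split_grammar_head_not_forbidden:
  "\<forall>(A, x, Per, For) \<in> Prods (split_grammar G). A \<notin> For"
  unfolding split_grammar_simps marks_def lift_def by auto

lemma split_grammar_wf:
  assumes wf: "rcg_wf G"
  shows "rcg_wf (split_grammar G)"
proof -
  let ?G' = "split_grammar G"
  have sym_in_enc: "sym_in ?G' (enc s)" if "sym_in G s" for s
    using that by (cases s) (auto simp: sym_in_def split_grammar_simps lift_def)
  have prods: "\<forall>(X, x', P', F') \<in> Prods ?G'. X \<in> Nts ?G' \<and> x' \<noteq> [] \<and>
        (\<forall>s \<in> set x'. sym_in ?G' s) \<and> P' \<subseteq> Nts ?G' \<and> F' \<subseteq> Nts ?G'"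
  proof clarify
    fix X x' P' F' assume "(X, x', P', F') \<in> Prods ?G'"
    then show "X \<in> Nts ?G' \<and> x' \<noteq> [] \<and> (\<forall>s \<in> set x'. sym_in ?G' s) \<and>
        P' \<subseteq> Nts ?G' \<and> F' \<subseteq> Nts ?G'"
    proof (cases rule: split_grammar_prods_cases)
      case mark
      then show ?thesis by (auto simp: split_grammar_simps marks_def lift_def sym_in_def)
    next
      case (rewrite B x P F)
      with wf have "B \<in> Nts G \<and> x \<noteq> [] \<and> (\<forall>s \<in> set x. sym_in G s) \<and> P \<subseteq> Nts G \<and> F \<subseteq> Nts G"
        unfolding rcg_wf_def by fastforce
      with rewrite sym_in_enc show ?thesis
        by (auto simp: split_grammar_simps marks_def lift_def)
    qed
  qed
  from wf have "finite (Nts G)" "finite (Tms G)" "Start G \<in> Nts G" "finite (Prods G)"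
    unfolding rcg_wf_def by simp_all
  then have "finite (Nts ?G')" "finite (Tms ?G')" "Start ?G' \<in> Nts ?G'" "finite (Prods ?G')"
    by (simp_all add: split_grammar_simps marks_def lift_def)
  with prods show ?thesis
    unfolding rcg_wf_def by (intro conjI) assumption+
qed

section \<open>Forward simulation\<close>

text \<open>One step of G is simulated by marking the rewritten nonterminal and then
  rewriting the marked copy.\<close>
lemma split_grammar_simulates_step:
  assumes wf: "rcg_wf G" and step: "rc_step G y y'"
  shows "(rc_step (split_grammar G))\<^sup>*\<^sup>* (map enc y) (map enc y')"
proof -
  from step obtain u v A x Per For where
    p: "(A, x, Per, For) \<in> Prods G" and y: "y = u @ [NT A] @ v" and y': "y' = u @ x @ v"
    and per: "NT ` Per \<subseteq> set (u @ v)" and forb: "set (u @ v) \<inter> NT ` For = {}"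
    by (rule rc_stepE)
  have "A \<in> Nts G" using wf p unfolding rcg_wf_def by fastforce
  then have mark_prod: "((NT A, 0), [NT (NT A, 1)], {}, marks G) \<in> Prods (split_grammar G)"
    by (simp add: split_grammar_simps)
  have rewrite_prod: "((NT A, 1), map enc x, lift Per, lift For) \<in> Prods (split_grammar G)"
    using p unfolding split_grammar_simps by force
  have "rc_step (split_grammar G) (map enc y) (marked u A v)"
    using rc_stepI[OF mark_prod, of "map enc u" "map enc v"] no_marks_in_enc[of "u @ v" G]
    unfolding y marked_def by simp
  moreover have "rc_step (split_grammar G) (marked u A v) (map enc y')"
    using rc_stepI[OF rewrite_prod, of "map enc u" "map enc v"] per forb
      enc_permitted[of Per "u @ v"] enc_forbidden[of "u @ v" For]
    unfolding y' marked_def map_append by simp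
  ultimately show ?thesis by simp
qed

lemma split_grammar_simulates:
  assumes "(rc_step G)\<^sup>*\<^sup>* y y'" "rcg_wf G"
  shows "(rc_step (split_grammar G))\<^sup>*\<^sup>* (map enc y) (map enc y')"
  using assms(1)
  by induction (auto intro: rtranclp_trans split_grammar_simulates_step[OF assms(2)])

section \<open>Backward simulation\<close>

lemma step_from_unmarked:
  assumes "rc_step (split_grammar G) (map enc y) z'"
  shows "\<exists>u A v. A \<in> Nts G \<and> y = u @ [NT A] @ v \<and> z' = marked u A v"
proof -
  from assms obtain u' v' X x' P' F' where p: "(X, x', P', F') \<in> Prods (split_grammar G)"
    and z: "map enc y = u' @ [NT X] @ v'" and z': "z' = u' @ x' @ v'"
    by (elim rc_stepE) (rule that)
  from p show ?thesis
  proof (cases rule: split_grammar_prods_cases)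
    case (mark B)
    with z obtain u v where "y = u @ NT B # v" "u' = map enc u" "v' = map enc v"
      by (auto elim: enc_split_ordinary)
    with mark z' show ?thesis by (auto simp: marked_def)
  next
    case (rewrite B)
    have "NT X \<in> set (map enc y)" unfolding z by simp
    with rewrite(2) marked_notin_enc[of 1 "NT B" y] show ?thesis by simp
  qed
qed

text \<open>From a marked form, the mark production is blocked by the mark itself.\<close>
lemma marked_blocks_mark_prod:
  assumes "marked u A v = u' @ [NT X] @ v'" and "A \<in> Nts G"
    and "set (u' @ v') \<inter> NT ` marks G = {}"
  shows "snd X \<noteq> 0"
proof
  assume "snd X = 0"
  have "NT (NT A, 1) \<in> set (marked u A v)" by (simp add: marked_def)
  then have "NT (NT A, 1) \<in> set (u' @ [NT X] @ v')" by (simp only: assms(1))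
  with \<open>snd X = 0\<close> have "NT (NT A, 1) \<in> set (u' @ v')" by auto
  moreover have "NT (NT A, 1) \<notin> set (u' @ v')"
    using assms(2,3) unfolding marks_def by blast
  ultimately show False by contradiction
qed

lemma step_from_marked:
  assumes "rc_step (split_grammar G) (marked u A v) z'" and "A \<in> Nts G"
  shows "\<exists>y'. rc_step G (u @ [NT A] @ v) y' \<and> z' = map enc y'"
proof -
  from assms(1) obtain u' v' X x' P' F' where p: "(X, x', P', F') \<in> Prods (split_grammar G)"
    and z: "marked u A v = u' @ [NT X] @ v'" and z': "z' = u' @ x' @ v'"
    and per: "NT ` P' \<subseteq> set (u' @ v')" and forb: "set (u' @ v') \<inter> NT ` F' = {}"
    by (rule rc_stepE)
  from p show ?thesis
  proof (cases rule: split_grammar_prods_cases)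
    case mark
    with marked_blocks_mark_prod[OF z assms(2)] forb show ?thesis by simp
  next
    case (rewrite B x P F)
    from z have "marked u A v = u' @ NT (NT B, 1) # v'" by (simp add: rewrite(2))
    from marked_split[OF this] have "B = A" and u': "u' = map enc u" and v': "v' = map enc v"
      by simp_all
    have "NT ` P \<subseteq> set (u @ v)"
      using per unfolding rewrite(4) u' v' map_append[symmetric] enc_permitted .
    moreover have "set (u @ v) \<inter> NT ` F = {}"
      using forb unfolding rewrite(5) u' v' map_append[symmetric] enc_forbidden .
    ultimately have "rc_step G (u @ [NT A] @ v) (u @ x @ v)"
      using rc_stepI[of A x P F G u v] rewrite(1) \<open>B = A\<close> by simp
    moreover have "z' = map enc (u @ x @ v)"
      using z' rewrite(3) u' v' by simp
    ultimately show ?thesis by blast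
  qed
qed

text \<open>Invariant of the backward simulation: a form derivable in the new grammar is the
  encoding of a form derivable in G, possibly with one nonterminal marked.\<close>
definition simulated :: "('n, 't) rcg \<Rightarrow> (('n, 't) sym \<times> nat, 't) sym list \<Rightarrow> bool" where
  "simulated G z \<longleftrightarrow>
     (\<exists>y. (rc_step G)\<^sup>*\<^sup>* [NT (Start G)] y \<and> z = map enc y) \<or>
     (\<exists>u A v. A \<in> Nts G \<and> (rc_step G)\<^sup>*\<^sup>* [NT (Start G)] (u @ [NT A] @ v) \<and> z = marked u A v)"

lemma simulated_step:
  assumes "simulated G z" and "rc_step (split_grammar G) z z'"
  shows "simulated G z'"
  using assms(1) unfolding simulated_def[of G z]
proof (elim disjE exE conjE)
  fix y assume "(rc_step G)\<^sup>*\<^sup>* [NT (Start G)] y" "z = map enc y"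
  with step_from_unmarked[of G y z'] assms(2) show ?thesis
    unfolding simulated_def by auto
next
  fix u A v assume A: "A \<in> Nts G" and
    derives: "(rc_step G)\<^sup>*\<^sup>* [NT (Start G)] (u @ [NT A] @ v)" and "z = marked u A v"
  with step_from_marked[of G u A v z'] assms(2) obtain y' where
    "rc_step G (u @ [NT A] @ v) y'" "z' = map enc y'" by auto
  moreover from derives this(1) have "(rc_step G)\<^sup>*\<^sup>* [NT (Start G)] y'" by simp
  ultimately show ?thesis
    unfolding simulated_def by blast
qed

lemma simulated_reachable:
  assumes "(rc_step (split_grammar G))\<^sup>*\<^sup>* [NT (NT (Start G), 0)] z"
  shows "simulated G z"
  using assms
proof induction
  case base
  show ?case
    unfolding simulated_def by (intro disjI1 exI[of _ "[NT (Start G)]"]) simp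
next
  case (step z z')
  from step.IH step.hyps(2) show ?case by (rule simulated_step)
qed

text \<open>A terminal word carries no mark, so it is the encoding of itself.\<close>
lemma simulated_terminal:
  fixes G :: "('n, 't) rcg"
  assumes "simulated G (map Tm w)"
  shows "(rc_step G)\<^sup>*\<^sup>* [NT (Start G)] (map Tm w)"
proof -
  have "map Tm w \<noteq> marked u A v" for u v :: "('n, 't) sym list" and A :: 'n
  proof
    assume eq: "map Tm w = marked u A v"
    have "NT (NT A, 1) \<in> set (marked u A v)" by (simp add: marked_def)
    then show False unfolding eq[symmetric] by auto
  qed
  with assms obtain y where "(rc_step G)\<^sup>*\<^sup>* [NT (Start G)] y" "map Tm w = map enc y"
    unfolding simulated_def by blast
  moreover from this(2) have "y = map Tm w"
    by (metis map_enc_Tm inj_enc inj_map_eq_map)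
  ultimately show ?thesis by simp
qed

lemma split_grammar_derives_terminal_iff:
  assumes "rcg_wf G"
  shows "(rc_step (split_grammar G))\<^sup>*\<^sup>* [NT (NT (Start G), 0)] (map Tm w)
     \<longleftrightarrow> (rc_step G)\<^sup>*\<^sup>* [NT (Start G)] (map Tm w)"
proof
  assume "(rc_step (split_grammar G))\<^sup>*\<^sup>* [NT (NT (Start G), 0)] (map Tm w)"
  then show "(rc_step G)\<^sup>*\<^sup>* [NT (Start G)] (map Tm w)"
    by (intro simulated_terminal simulated_reachable)
next
  assume "(rc_step G)\<^sup>*\<^sup>* [NT (Start G)] (map Tm w)"
  from split_grammar_simulates[OF this assms]
  show "(rc_step (split_grammar G))\<^sup>*\<^sup>* [NT (NT (Start G), 0)] (map Tm w)"
    unfolding map_enc_Tm by simp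
qed

theorem lemma1:
  fixes G :: "('n, 't) rcg"
  assumes "rcg_wf G"
  shows "\<exists>G' :: (('n, 't) sym \<times> nat, 't) rcg.
           rcg_wf G' \<and> rc_lang G' = rc_lang G \<and>
           (\<forall>(A, x, Per, For) \<in> Prods G'. A \<notin> For)"
proof (intro exI conjI)
  show "rcg_wf (split_grammar G)"
    using assms by (rule split_grammar_wf)
  show "rc_lang (split_grammar G) = rc_lang G"
    unfolding rc_lang_def split_grammar_simps
    using split_grammar_derives_terminal_iff[OF assms] by simp
  show "\<forall>(A, x, Per, For) \<in> Prods (split_grammar G). A \<notin> For"
    by (rule split_grammar_head_not_forbidden)
qed

end
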